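(* Assume $M=\Gamma\backslash G$ satisfies the strong spectral gap assumption. There exist constants $\eta'\in(0,1)$ and $C'_M>0$, depending only on $M$, such that the following holds. Let $f\colon M\to\mathbb C$ have zero average and finite Sobolev norm $\mathcal S(f)$. For every $\omega>0$ there exist a set $Y=Y(\omega,f)\subset M$ with $\mu(Y)\ge1-\omega$ and a number $m'=m'(\omega)\ge1$ such that for all $x\in Y$ and all $t\ge m'$, \[\Big|\int_0^t f(x\mathbf u^s)\,ds\Big|\le C'_M\,\mathcal S(f)\,t^{1-\eta'}.\]
   Context: $G$ is a connected semisimple linear Lie group, $\Gamma$ a lattice, $M=\Gamma\backslash G$ with Haar probability $\mu$; $\mathbf u^t=\exp(tU)$ with $U\ne0$, $\mathrm{ad}(U)$ nilpotent, and $\phi^t(x)=x\mathbf u^t$. Strong spectral gap: the restriction of the regular representation of $G$ on $L^2(M,\mu)$ to every noncompact simple factor of $G$ is isolated from the trivial representation in the Fell topology. $\mathcal S$ is a Sobolev norm on functions on $M$, with $\sup_M|f|\le\mathcal S(f)$, for which there are $C_M,\tilde\eta>0$ such that $|\langle f\circ\phi^t,g\rangle|\le C_M\mathcal S(f)\mathcal S(g)t^{-\tilde\eta}$ for all $t\ge1$ and all sufficiently smooth zero-average $f,g$. *)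

theory Defs
  imports "HOL-Probability.Probability"
begin

definition corr :: "'a measure \<Rightarrow> (real \<Rightarrow> 'a \<Rightarrow> 'a) \<Rightarrow> ('a \<Rightarrow> complex) \<Rightarrow> ('a \<Rightarrow> complex) \<Rightarrow> real \<Rightarrow> complex" where
  "corr M \<phi> f g t = (\<integral>x. f (\<phi> t x) * cnj (g x) \<partial>M)"

text \<open>Abstract standing assumptions: M is a probability space, phi a jointly measurable,
  measure-preserving flow on it, F the class of functions of finite Sobolev norm S,
  with the sup-norm bound and the polynomial decay of correlations.\<close>
definition mixing_flow_setting ::
  "'a measure \<Rightarrow> (real \<Rightarrow> 'a \<Rightarrow> 'a) \<Rightarrow> ('a \<Rightarrow> complex) set \<Rightarrow> (('a \<Rightarrow> complex) \<Rightarrow> real)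
    \<Rightarrow> real \<Rightarrow> real \<Rightarrow> bool" where
  "mixing_flow_setting M \<phi> F S C\<^sub>M \<eta> \<longleftrightarrow>
     prob_space M \<and>
     (\<lambda>(s, x). \<phi> s x) \<in> (lborel \<Otimes>\<^sub>M M) \<rightarrow>\<^sub>M M \<and>
     (\<forall>x\<in>space M. \<phi> 0 x = x) \<and>
     (\<forall>s t. \<forall>x\<in>space M. \<phi> (s + t) x = \<phi> t (\<phi> s x)) \<and>
     (\<forall>t. distr M M (\<phi> t) = M) \<and>
     C\<^sub>M > 0 \<and> \<eta> > 0 \<and>
     (\<forall>f\<in>F. f \<in> borel_measurable M \<and> (\<forall>x\<in>space M. cmod (f x) \<le> S f)) \<and>
     (\<forall>f\<in>F. \<forall>g\<in>F. \<forall>t::real. t \<ge> 1 \<longrightarrow>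
        (\<integral>x. f x \<partial>M) = 0 \<longrightarrow> (\<integral>x. g x \<partial>M) = 0 \<longrightarrow>
        cmod (corr M \<phi> f g t) \<le> C\<^sub>M * S f * S g * t powr (- \<eta>))"

end

theory Submission
  imports Defs
begin

text \<open>Write I_t(x) for the integral of f along the orbit of x up to time t. Expanding
  |I_t|^2 and using the decay of correlations outside a diagonal strip of width \<surd>t bounds
  the mean of |I_t|^2 by t^(2 - \<delta>), where \<delta> = min (1/2) (\<eta>/2). Along the sparse times
  t_n = n^p with p\<delta> \<ge> 4, Chebyshev's inequality then gives |I_(t_n)(x)| > S(f) t_n^(1 - 1/p)
  with probability O(n^-2), uniformly in f, so discarding the exceptional sets for all n \<ge> N costs
  less than \<omega> once N is large. Between consecutive sparse times I_t(x) moves by at most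
  S(f) (t_(n+1) - t_n) = O(S(f) t_n^(1 - 1/p)), which gives the bound for all t \<ge> t_N
  with \<eta>' = 1/p.\<close>

lemma borel_measurable_cnj [measurable]:
  "(f :: 'a \<Rightarrow> complex) \<in> borel_measurable M \<Longrightarrow> (\<lambda>x. cnj (f x)) \<in> borel_measurable M"
  by (intro borel_measurable_continuous_on[where f = cnj] continuous_intros)

lemma finite_measure_restrict_lborel:
  "A \<in> sets lborel \<Longrightarrow> emeasure lborel A < \<infinity> \<Longrightarrow> finite_measure (restrict_space lborel A)"
  by (rule finite_measureI) (simp add: space_restrict_space emeasure_restrict_space)

lemma norm_integral_le_measure:
  fixes g :: "'a \<Rightarrow> 'b::{banach, second_countable_topology}"
  assumes "finite_measure N" and bound: "\<And>x. x \<in> space N \<Longrightarrow> norm (g x) \<le> B"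
  shows "norm (integral\<^sup>L N g) \<le> B * measure N (space N)"
proof (cases "integrable N g")
  case True
  have "norm (integral\<^sup>L N g) \<le> (\<integral>x. norm (g x) \<partial>N)" by (rule integral_norm_bound)
  also have "\<dots> \<le> (\<integral>x. B \<partial>N)"
    using True assms by (intro integral_mono) (auto intro!: finite_measure.integrable_const)
  also have "\<dots> = B * measure N (space N)" by simp
  finally show ?thesis .
next
  case False
  then have "norm (integral\<^sup>L N g) = 0" by (simp add: not_integrable_integral_eq)
  moreover have "0 \<le> B * measure N (space N)"
  proof (cases "space N = {}")
    case False
    then obtain x where "x \<in> space N" by auto
    then have "0 \<le> B" using bound by (meson norm_ge_zero order_trans)
    then show ?thesis by simp
  qed simp
  ultimately show ?thesis by simp
qed

abbreviation lborel_upto :: "real \<Rightarrow> real measure" where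
  "lborel_upto t \<equiv> restrict_space lborel {0..t}"

lemma finite_measure_lborel_upto: "finite_measure (lborel_upto t)"
  by (rule finite_measure_restrict_lborel) (simp_all add: emeasure_lborel_Icc_eq)

lemma norm_integral_lborel_upto_le:
  fixes g :: "real \<Rightarrow> 'b::{banach, second_countable_topology}"
  assumes "0 \<le> t" "\<And>s. s \<in> {0..t} \<Longrightarrow> norm (g s) \<le> B"
  shows "norm (integral\<^sup>L (lborel_upto t) g) \<le> B * t"
  using norm_integral_le_measure[OF finite_measure_lborel_upto[of t], where g = g and B = B] assms
  by (simp add: space_restrict_space measure_restrict_space)

lemma integral_indicator_lborel_upto_le:
  assumes "0 \<le> K"
  shows "(\<integral>r. indicator {s - K<..<s + K} r \<partial>lborel_upto t) \<le> 2 * K"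
proof -
  let ?A = "{s - K<..<s + K}"
  have "(\<integral>r. indicator ?A r \<partial>lborel_upto t) = measure lborel (?A \<inter> {0..t})"
    by (simp add: space_restrict_space measure_restrict_space)
  also have "\<dots> \<le> measure lborel {s - K..s + K}"
    by (rule measure_mono_fmeasurable) (auto simp: fmeasurable_def emeasure_lborel_Icc_eq)
  also have "\<dots> = 2 * K" using assms by simp
  finally show ?thesis .
qed

lemma Fubini_integral_bounded:
  fixes g :: "'a \<Rightarrow> 'b \<Rightarrow> 'c::{banach, second_countable_topology}"
  assumes "finite_measure N1" "finite_measure N2"
    and "(\<lambda>(x, y). g x y) \<in> borel_measurable (N1 \<Otimes>\<^sub>M N2)"
    and "\<And>x y. x \<in> space N1 \<Longrightarrow> y \<in> space N2 \<Longrightarrow> norm (g x y) \<le> B"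
  shows "(\<integral>y. (\<integral>x. g x y \<partial>N1) \<partial>N2) = (\<integral>x. (\<integral>y. g x y \<partial>N2) \<partial>N1)"
proof -
  interpret N1: finite_measure N1 by fact
  interpret N2: finite_measure N2 by fact
  interpret pair_sigma_finite N1 N2 by unfold_locales
  have "integrable (N1 \<Otimes>\<^sub>M N2) (\<lambda>(x, y). g x y)"
    by (rule finite_measure.integrable_const_bound[where B = B])
       (use assms in \<open>auto intro: finite_measure_pair_measure simp: space_pair_measure\<close>)
  then show ?thesis by (rule Fubini_integral)
qed

lemma power_diff_le_mean_value:
  fixes x y :: real
  assumes "0 \<le> x" "x \<le> y"
  shows "y ^ p - x ^ p \<le> real p * y ^ (p - 1) * (y - x)"
proof (induction p)
  case 0 then show ?case by simp
next
  case (Suc p)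
  have "y ^ Suc p - x ^ Suc p = y * (y ^ p - x ^ p) + x ^ p * (y - x)"
    by (simp add: algebra_simps)
  also have "\<dots> \<le> y * (real p * y ^ (p - 1) * (y - x)) + y ^ p * (y - x)"
    using Suc assms by (intro add_mono mult_left_mono mult_right_mono power_mono) auto
  also have "\<dots> = real (Suc p) * y ^ (Suc p - 1) * (y - x)"
    by (cases p) (auto simp: algebra_simps)
  finally show ?case .
qed

lemma diagonal_window_bound:
  fixes t c \<eta> :: real
  assumes "1 \<le> t" "0 \<le> c" "0 < \<eta>"
  shows "(2 * sqrt t + c * sqrt t powr (- \<eta>) * t) * t \<le> (2 + c) * t powr (2 - min (1/2) (\<eta>/2))"
proof -
  let ?\<delta> = "min (1/2) (\<eta>/2)"
  have "sqrt t * t = t powr (1/2) * t powr 1"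
    using assms by (simp add: powr_half_sqrt)
  also have "\<dots> = t powr (3/2)"
    by (subst powr_add[symmetric]) simp
  finally have sqrt_t: "sqrt t * t = t powr (3/2)" .
  have "sqrt t powr (- \<eta>) * t * t = t powr (- \<eta>/2) * t powr 1 * t powr 1"
    using assms by (simp add: powr_half_sqrt[symmetric] powr_powr)
  also have "\<dots> = t powr (2 - \<eta>/2)"
    by (subst powr_add[symmetric])+ (simp add: algebra_simps)
  finally have sqrt_t_eta: "sqrt t powr (- \<eta>) * t * t = t powr (2 - \<eta>/2)" .
  have "(2 * sqrt t + c * sqrt t powr (- \<eta>) * t) * t = 2 * t powr (3/2) + c * t powr (2 - \<eta>/2)"
    using sqrt_t sqrt_t_eta by (simp add: algebra_simps)
  also have "\<dots> \<le> 2 * t powr (2 - ?\<delta>) + c * t powr (2 - ?\<delta>)"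
    using assms by (intro add_mono mult_left_mono powr_mono) auto
  finally show ?thesis by (simp add: algebra_simps)
qed

locale mixing_flow =
  fixes M :: "'a measure" and \<phi> :: "real \<Rightarrow> 'a \<Rightarrow> 'a"
    and F :: "('a \<Rightarrow> complex) set" and S :: "('a \<Rightarrow> complex) \<Rightarrow> real"
    and C\<^sub>M \<eta> :: real
  assumes setting: "mixing_flow_setting M \<phi> F S C\<^sub>M \<eta>"
begin

lemma prob_space: "prob_space M"
  and flow_measurable: "(\<lambda>(s, x). \<phi> s x) \<in> lborel \<Otimes>\<^sub>M M \<rightarrow>\<^sub>M M"
  and flow_add: "x \<in> space M \<Longrightarrow> \<phi> (s + t) x = \<phi> t (\<phi> s x)"
  and distr_flow: "distr M M (\<phi> t) = M"
  and C\<^sub>M_pos: "0 < C\<^sub>M" and \<eta>_pos: "0 < \<eta>"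
  and F_measurable: "f \<in> F \<Longrightarrow> f \<in> borel_measurable M"
  and F_bound: "f \<in> F \<Longrightarrow> x \<in> space M \<Longrightarrow> cmod (f x) \<le> S f"
  and corr_decay: "\<lbrakk>f \<in> F; g \<in> F; 1 \<le> t; (\<integral>x. f x \<partial>M) = 0; (\<integral>x. g x \<partial>M) = 0\<rbrakk>
      \<Longrightarrow> cmod (corr M \<phi> f g t) \<le> C\<^sub>M * S f * S g * t powr (- \<eta>)"
  using setting by (simp_all add: mixing_flow_setting_def)

lemma finite_measure: "finite_measure M"
  using prob_space by (simp add: prob_space_def)

lemma S_nonneg: "f \<in> F \<Longrightarrow> 0 \<le> S f"
  using prob_space.not_empty[OF prob_space] F_bound by (meson ex_in_conv norm_ge_zero order_trans)

lemma measurable_flow_compose: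
  "a \<in> N \<rightarrow>\<^sub>M lborel \<Longrightarrow> b \<in> N \<rightarrow>\<^sub>M M \<Longrightarrow> (\<lambda>w. \<phi> (a w) (b w)) \<in> N \<rightarrow>\<^sub>M M"
  using measurable_comp[OF measurable_Pair flow_measurable] by (simp add: o_def)

lemma measurable_F_flow_compose:
  "f \<in> F \<Longrightarrow> a \<in> N \<rightarrow>\<^sub>M lborel \<Longrightarrow> b \<in> N \<rightarrow>\<^sub>M M \<Longrightarrow> (\<lambda>w. f (\<phi> (a w) (b w))) \<in> borel_measurable N"
  using measurable_comp[OF measurable_flow_compose F_measurable] by (simp add: o_def)

lemma flow_time_measurable: "\<phi> t \<in> M \<rightarrow>\<^sub>M M"
  using measurable_flow_compose[of "\<lambda>_. t" M "\<lambda>x. x"] by simp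

lemma flow_in_space: "x \<in> space M \<Longrightarrow> \<phi> s x \<in> space M"
  using measurable_space[OF flow_time_measurable] .

lemma measurable_into_lborel_upto:
  "a \<in> N \<rightarrow>\<^sub>M lborel_upto t \<Longrightarrow> a \<in> N \<rightarrow>\<^sub>M lborel"
  using measurable_compose[OF _ measurable_restrict_space1[of "\<lambda>x. x" lborel lborel]] by simp

definition ergodic_integral :: "('a \<Rightarrow> complex) \<Rightarrow> real \<Rightarrow> 'a \<Rightarrow> complex" where
  "ergodic_integral f t x = (\<integral>s. f (\<phi> s x) \<partial>lborel_upto t)"

lemma ergodic_integral_measurable: "f \<in> F \<Longrightarrow> ergodic_integral f t \<in> borel_measurable M"
  unfolding ergodic_integral_def
proof (rule sigma_finite_measure.borel_measurable_lebesgue_integral)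
  show "sigma_finite_measure (lborel_upto t)"
    using finite_measure_lborel_upto by (simp add: finite_measure_def)
  assume "f \<in> F"
  from measurable_F_flow_compose[OF this measurable_into_lborel_upto[OF measurable_snd] measurable_fst]
  show "(\<lambda>(x, s). f (\<phi> s x)) \<in> borel_measurable (M \<Otimes>\<^sub>M lborel_upto t)"
    by (simp add: case_prod_beta')
qed

lemma norm_ergodic_integral_le:
  "f \<in> F \<Longrightarrow> x \<in> space M \<Longrightarrow> 0 \<le> t \<Longrightarrow> cmod (ergodic_integral f t x) \<le> S f * t"
  unfolding ergodic_integral_def by (rule norm_integral_lborel_upto_le) (auto intro: F_bound flow_in_space)

lemma norm_ergodic_integral_diff_le:
  assumes f: "f \<in> F" and x: "x \<in> space M" and "0 \<le> u" "u \<le> t"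
  shows "cmod (ergodic_integral f t x - ergodic_integral f u x) \<le> S f * (t - u)"
proof -
  let ?g = "\<lambda>s. f (\<phi> s x)"
  have bound: "cmod (?g s) \<le> S f" for s using F_bound[OF f flow_in_space[OF x]] .
  have integrable: "integrable lborel (\<lambda>s. indicator A s *\<^sub>R ?g s)"
    if "A \<in> sets lborel" "emeasure lborel A < \<infinity>" for A
  proof -
    have "?g \<in> borel_measurable lborel"
      using measurable_F_flow_compose[OF f, of "\<lambda>s. s" lborel "\<lambda>_. x"] x by simp
    then have "integrable (restrict_space lborel A) ?g"
      by (intro finite_measure.integrable_const_bound[OF finite_measure_restrict_lborel[OF that]])
         (auto intro: measurable_restrict_space1 bound)
    then show ?thesis using that by (simp add: integrable_restrict_space)
  qed
  have "ergodic_integral f t x - ergodic_integral f u x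
        = (\<integral>s. indicator {0..t} s *\<^sub>R ?g s - indicator {0..u} s *\<^sub>R ?g s \<partial>lborel)"
    unfolding ergodic_integral_def
    by (simp add: integral_restrict_space, rule Bochner_Integration.integral_diff[symmetric])
       (auto intro!: integrable simp: emeasure_lborel_Icc_eq)
  also have "\<dots> = (\<integral>s. indicator {u<..t} s *\<^sub>R ?g s \<partial>lborel)"
    by (rule Bochner_Integration.integral_cong) (use assms in \<open>auto simp: indicator_def\<close>)
  also have "\<dots> = integral\<^sup>L (restrict_space lborel {u<..t}) ?g"
    by (simp add: integral_restrict_space)
  finally have "ergodic_integral f t x - ergodic_integral f u x
      = integral\<^sup>L (restrict_space lborel {u<..t}) ?g" .
  moreover have "cmod (integral\<^sup>L (restrict_space lborel {u<..t}) ?g)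
      \<le> S f * measure (restrict_space lborel {u<..t}) (space (restrict_space lborel {u<..t}))"
    using assms by (intro norm_integral_le_measure finite_measure_restrict_lborel bound) simp_all
  ultimately show ?thesis using assms by (simp add: space_restrict_space measure_restrict_space)
qed

definition time_correlation :: "('a \<Rightarrow> complex) \<Rightarrow> real \<Rightarrow> real \<Rightarrow> complex" where
  "time_correlation f s r = (\<integral>x. f (\<phi> s x) * cnj (f (\<phi> r x)) \<partial>M)"

lemma measurable_orbit_product:
  assumes "f \<in> F" "a \<in> N \<rightarrow>\<^sub>M lborel" "a' \<in> N \<rightarrow>\<^sub>M lborel" "b \<in> N \<rightarrow>\<^sub>M M"
  shows "(\<lambda>w. f (\<phi> (a w) (b w)) * cnj (f (\<phi> (a' w) (b w)))) \<in> borel_measurable N"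
  using measurable_F_flow_compose[OF assms(1,2,4)] measurable_F_flow_compose[OF assms(1,3,4)]
  by measurable

lemma norm_orbit_product_le:
  "f \<in> F \<Longrightarrow> x \<in> space M \<Longrightarrow> cmod (f (\<phi> s x) * cnj (f (\<phi> r x))) \<le> S f * S f"
  unfolding norm_mult complex_mod_cnj
  by (intro mult_mono F_bound flow_in_space S_nonneg) auto

lemma time_correlation_eq_corr:
  assumes f: "f \<in> F" and "r \<le> s"
  shows "time_correlation f s r = corr M \<phi> f f (s - r)"
proof -
  let ?h = "\<lambda>y. f (\<phi> (s - r) y) * cnj (f y)"
  have h_measurable: "?h \<in> borel_measurable M"
    using measurable_F_flow_compose[OF f, of "\<lambda>_. s - r" M "\<lambda>y. y"] F_measurable[OF f] by measurable
  have "time_correlation f s r = (\<integral>x. ?h (\<phi> r x) \<partial>M)"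
    unfolding time_correlation_def
    by (rule Bochner_Integration.integral_cong) (use flow_add[of _ r "s - r"] in auto)
  also have "\<dots> = integral\<^sup>L (distr M M (\<phi> r)) ?h"
    by (rule integral_distr[OF flow_time_measurable h_measurable, symmetric])
  finally show ?thesis by (simp add: distr_flow corr_def)
qed

lemma time_correlation_swap: "time_correlation f s r = cnj (time_correlation f r s)"
  using Bochner_Integration.integral_cnj[of M "\<lambda>x. f (\<phi> r x) * cnj (f (\<phi> s x))"]
  unfolding time_correlation_def by (simp add: mult.commute)

lemma norm_time_correlation_le:
  assumes f: "f \<in> F" and f0: "(\<integral>x. f x \<partial>M) = 0" and K: "1 \<le> K"
  shows "cmod (time_correlation f s r)
    \<le> (S f)\<^sup>2 * indicator {s - K<..<s + K} r + C\<^sub>M * (S f)\<^sup>2 * K powr (- \<eta>)"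
proof (cases "\<bar>s - r\<bar> < K")
  case True
  have "cmod (time_correlation f s r) \<le> S f * S f * measure M (space M)"
    unfolding time_correlation_def
    by (intro norm_integral_le_measure finite_measure norm_orbit_product_le f)
  moreover have "0 \<le> C\<^sub>M * (S f)\<^sup>2 * K powr (- \<eta>)"
    using C\<^sub>M_pos by simp
  ultimately show ?thesis
    using True prob_space.prob_space[OF prob_space]
    by (auto simp: power2_eq_square indicator_def abs_less_iff)
next
  case False
  have decay: "cmod (corr M \<phi> f f u) \<le> C\<^sub>M * (S f)\<^sup>2 * K powr (- \<eta>)" if "K \<le> u" for u
  proof -
    have "cmod (corr M \<phi> f f u) \<le> C\<^sub>M * S f * S f * u powr (- \<eta>)"
      using corr_decay[OF f f _ f0 f0] that K by simp
    also have "\<dots> \<le> C\<^sub>M * S f * S f * K powr (- \<eta>)"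
      using that K \<eta>_pos C\<^sub>M_pos S_nonneg[OF f] by (intro mult_left_mono powr_mono2') auto
    finally show ?thesis by (simp add: power2_eq_square)
  qed
  have "cmod (time_correlation f s r) \<le> C\<^sub>M * (S f)\<^sup>2 * K powr (- \<eta>)"
  proof (cases "r \<le> s")
    case True
    then show ?thesis using False decay[of "s - r"] by (simp add: time_correlation_eq_corr[OF f])
  next
    case False
    then show ?thesis using \<open>\<not> \<bar>s - r\<bar> < K\<close> decay[of "r - s"]
      by (subst time_correlation_swap) (simp add: time_correlation_eq_corr[OF f])
  qed
  then show ?thesis using False by (auto simp: indicator_def abs_less_iff)
qed

lemma norm_integral_time_correlation_le:
  assumes f: "f \<in> F" and f0: "(\<integral>x. f x \<partial>M) = 0" and "0 \<le> t" and K: "1 \<le> K"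
  shows "cmod (\<integral>r. time_correlation f s r \<partial>lborel_upto t)
    \<le> (S f)\<^sup>2 * (2 * K) + C\<^sub>M * (S f)\<^sup>2 * K powr (- \<eta>) * t"
proof (cases "integrable (lborel_upto t) (time_correlation f s)")
  case False
  then show ?thesis using assms C\<^sub>M_pos by (simp add: not_integrable_integral_eq)
next
  case True
  let ?c = "C\<^sub>M * (S f)\<^sup>2 * K powr (- \<eta>)"
  let ?ind = "\<lambda>r. indicator {s - K<..<s + K} r :: real"
  have "integrable (lborel_upto t) ?ind"
    by (rule finite_measure.integrable_const_bound[OF finite_measure_lborel_upto, where B = 1])
       (auto intro: measurable_restrict_space1 simp: indicator_def)
  then have "(\<integral>r. (S f)\<^sup>2 * ?ind r + ?c \<partial>lborel_upto t) = (S f)\<^sup>2 * (\<integral>r. ?ind r \<partial>lborel_upto t) + ?c * t"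
    using \<open>0 \<le> t\<close> finite_measure_lborel_upto
    by (simp add: finite_measure.integrable_const measure_restrict_space del: Bochner_Integration.integral_indicator)
  moreover have "cmod (\<integral>r. time_correlation f s r \<partial>lborel_upto t)
      \<le> (\<integral>r. (S f)\<^sup>2 * ?ind r + ?c \<partial>lborel_upto t)"
    using True \<open>integrable _ ?ind\<close> finite_measure_lborel_upto norm_time_correlation_le[OF f f0 K]
    by (intro order_trans[OF integral_norm_bound] integral_mono)
       (auto intro!: finite_measure.integrable_const)
  moreover have "(S f)\<^sup>2 * (\<integral>r. ?ind r \<partial>lborel_upto t) \<le> (S f)\<^sup>2 * (2 * K)"
    using integral_indicator_lborel_upto_le[of K t s] K by (intro mult_left_mono) auto
  ultimately show ?thesis by linarith
qed

lemma ergodic_integral_mult_cnj: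
  "ergodic_integral f t x * cnj (ergodic_integral f t x)
    = (\<integral>s. (\<integral>r. f (\<phi> s x) * cnj (f (\<phi> r x)) \<partial>lborel_upto t) \<partial>lborel_upto t)"
proof -
  have cnj_eq: "cnj (ergodic_integral f t x) = (\<integral>r. cnj (f (\<phi> r x)) \<partial>lborel_upto t)"
    unfolding ergodic_integral_def by simp
  have "ergodic_integral f t x * cnj (ergodic_integral f t x)
      = (\<integral>s. f (\<phi> s x) * cnj (ergodic_integral f t x) \<partial>lborel_upto t)"
    unfolding ergodic_integral_def by (rule integral_mult_left_zero[symmetric])
  also have "\<dots> = (\<integral>s. (\<integral>r. f (\<phi> s x) * cnj (f (\<phi> r x)) \<partial>lborel_upto t) \<partial>lborel_upto t)"
    unfolding cnj_eq by simp
  finally show ?thesis .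
qed

lemma integral_ergodic_integral_mult_cnj:
  assumes f: "f \<in> F" and "0 \<le> t"
  shows "(\<integral>x. ergodic_integral f t x * cnj (ergodic_integral f t x) \<partial>M)
    = (\<integral>s. (\<integral>r. time_correlation f s r \<partial>lborel_upto t) \<partial>lborel_upto t)"
proof -
  let ?L = "lborel_upto t"
  let ?g = "\<lambda>x s r. f (\<phi> s x) * cnj (f (\<phi> r x))"
  have s: "(\<lambda>w. fst (fst w)) \<in> (?L \<Otimes>\<^sub>M M) \<Otimes>\<^sub>M ?L \<rightarrow>\<^sub>M lborel"
    by (rule measurable_into_lborel_upto[where t = t]) measurable
  have r: "snd \<in> (?L \<Otimes>\<^sub>M M) \<Otimes>\<^sub>M ?L \<rightarrow>\<^sub>M lborel"
    by (rule measurable_into_lborel_upto[OF measurable_snd])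
  have x: "(\<lambda>w. snd (fst w)) \<in> (?L \<Otimes>\<^sub>M M) \<Otimes>\<^sub>M ?L \<rightarrow>\<^sub>M M"
    by measurable
  have "(\<lambda>(w, r). ?g (snd w) (fst w) r) \<in> borel_measurable ((?L \<Otimes>\<^sub>M M) \<Otimes>\<^sub>M ?L)"
    using measurable_orbit_product[OF f s r x] by (simp add: case_prod_beta')
  moreover have "sigma_finite_measure ?L"
    using finite_measure_lborel_upto by (simp add: finite_measure_def)
  ultimately have "(\<lambda>w. \<integral>r. ?g (snd w) (fst w) r \<partial>?L) \<in> borel_measurable (?L \<Otimes>\<^sub>M M)"
    by (intro sigma_finite_measure.borel_measurable_lebesgue_integral)
  then have inner_measurable: "(\<lambda>(s, x). \<integral>r. ?g x s r \<partial>?L) \<in> borel_measurable (?L \<Otimes>\<^sub>M M)"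
    by (simp add: case_prod_beta')
  have inner_bound: "cmod (\<integral>r. ?g x s r \<partial>?L) \<le> S f * S f * t"
    if "s \<in> space ?L" "x \<in> space M" for s x
    using \<open>0 \<le> t\<close> by (intro norm_integral_lborel_upto_le norm_orbit_product_le f that(2))
  have product_measurable: "(\<lambda>(r, x). ?g x s r) \<in> borel_measurable (?L \<Otimes>\<^sub>M M)" for s
  proof -
    have "fst \<in> ?L \<Otimes>\<^sub>M M \<rightarrow>\<^sub>M lborel"
      by (rule measurable_into_lborel_upto[OF measurable_fst])
    from measurable_orbit_product[OF f _ this measurable_snd]
    show ?thesis by (simp add: case_prod_beta')
  qed
  have product_bound: "cmod (?g x s r) \<le> S f * S f" if "r \<in> space ?L" "x \<in> space M" for s r x
    by (rule norm_orbit_product_le[OF f that(2)])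
  have "(\<integral>x. ergodic_integral f t x * cnj (ergodic_integral f t x) \<partial>M)
      = (\<integral>x. (\<integral>s. (\<integral>r. ?g x s r \<partial>?L) \<partial>?L) \<partial>M)"
    by (simp only: ergodic_integral_mult_cnj)
  also have "\<dots> = (\<integral>s. (\<integral>x. (\<integral>r. ?g x s r \<partial>?L) \<partial>M) \<partial>?L)"
    by (rule Fubini_integral_bounded[OF finite_measure_lborel_upto finite_measure inner_measurable inner_bound])
  also have "\<dots> = (\<integral>s. (\<integral>r. (\<integral>x. ?g x s r \<partial>M) \<partial>?L) \<partial>?L)"
    by (intro Bochner_Integration.integral_cong refl
        Fubini_integral_bounded[OF finite_measure_lborel_upto finite_measure product_measurable product_bound])
  finally show ?thesis
    unfolding time_correlation_def .
qed

definition \<delta> :: real where "\<delta> = min (1/2) (\<eta>/2)"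

lemma \<delta>_pos: "0 < \<delta>" and \<delta>_le_half: "\<delta> \<le> 1/2"
  using \<eta>_pos by (auto simp: \<delta>_def)

lemma integral_norm_ergodic_integral_square_le:
  assumes f: "f \<in> F" and f0: "(\<integral>x. f x \<partial>M) = 0" and t: "1 \<le> t"
  shows "(\<integral>x. (cmod (ergodic_integral f t x))\<^sup>2 \<partial>M) \<le> (2 + C\<^sub>M) * (S f)\<^sup>2 * t powr (2 - \<delta>)"
proof -
  let ?K = "sqrt t"
  have "complex_of_real (\<integral>x. (cmod (ergodic_integral f t x))\<^sup>2 \<partial>M)
      = (\<integral>x. ergodic_integral f t x * cnj (ergodic_integral f t x) \<partial>M)"
    unfolding integral_complex_of_real[symmetric] complex_norm_square ..
  also have "\<dots> = (\<integral>s. (\<integral>r. time_correlation f s r \<partial>lborel_upto t) \<partial>lborel_upto t)"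
    using f t by (simp add: integral_ergodic_integral_mult_cnj)
  finally have "(\<integral>x. (cmod (ergodic_integral f t x))\<^sup>2 \<partial>M)
      \<le> cmod (\<integral>s. (\<integral>r. time_correlation f s r \<partial>lborel_upto t) \<partial>lborel_upto t)"
    by (metis Re_complex_of_real complex_Re_le_cmod)
  also have "\<dots> \<le> ((S f)\<^sup>2 * (2 * ?K) + C\<^sub>M * (S f)\<^sup>2 * ?K powr (- \<eta>) * t) * t"
    using t by (intro norm_integral_lborel_upto_le norm_integral_time_correlation_le f f0) auto
  also have "\<dots> = (S f)\<^sup>2 * ((2 * ?K + C\<^sub>M * ?K powr (- \<eta>) * t) * t)"
    by (simp add: algebra_simps)
  also have "\<dots> \<le> (S f)\<^sup>2 * ((2 + C\<^sub>M) * t powr (2 - \<delta>))"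
    unfolding \<delta>_def using t C\<^sub>M_pos \<eta>_pos by (intro mult_left_mono diagonal_window_bound) auto
  finally show ?thesis by (simp add: algebra_simps)
qed

lemma measure_ergodic_integral_gt_le:
  assumes f: "f \<in> F" and f0: "(\<integral>x. f x \<partial>M) = 0" and t: "1 \<le> t" and "0 < c"
  shows "measure M {x \<in> space M. c < cmod (ergodic_integral f t x)}
    \<le> (2 + C\<^sub>M) * (S f)\<^sup>2 * t powr (2 - \<delta>) / c\<^sup>2"
proof -
  let ?u = "\<lambda>x. (cmod (ergodic_integral f t x))\<^sup>2"
  have u_measurable: "?u \<in> borel_measurable M"
    using ergodic_integral_measurable[OF f] by measurable
  have "integrable M ?u"
  proof (rule finite_measure.integrable_const_bound[OF finite_measure _ u_measurable])
    show "AE x in M. norm (?u x) \<le> (S f * t)\<^sup>2"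
      using t norm_ergodic_integral_le[OF f, of _ t] by (intro AE_I2) (auto intro!: power_mono)
  qed
  have "{x \<in> space M. c\<^sup>2 \<le> ?u x} \<in> sets M"
    using u_measurable by measurable
  then have "measure M {x \<in> space M. c < cmod (ergodic_integral f t x)} \<le> measure M {x \<in> space M. c\<^sup>2 \<le> ?u x}"
    using \<open>0 < c\<close> by (intro finite_measure.finite_measure_mono[OF finite_measure]) (auto intro: power_mono)
  also have "\<dots> \<le> (\<integral>x. ?u x \<partial>M) / c\<^sup>2"
    using \<open>0 < c\<close> by (intro integral_Markov_inequality_measure[OF \<open>integrable M ?u\<close>]) auto
  also have "\<dots> \<le> (2 + C\<^sub>M) * (S f)\<^sup>2 * t powr (2 - \<delta>) / c\<^sup>2"
    by (intro divide_right_mono integral_norm_ergodic_integral_square_le f f0 t) simp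
  finally show ?thesis .
qed

definition p :: nat where "p = nat \<lceil>4 / \<delta>\<rceil> + 1"

lemma four_le_p_\<delta>: "4 \<le> real p * \<delta>" and two_le_p: "2 \<le> p"
proof -
  have "4 / \<delta> \<le> real p"
    unfolding p_def by linarith
  then show "4 \<le> real p * \<delta>"
    using \<delta>_pos by (simp add: field_simps)
  moreover have "8 \<le> 4 / \<delta>"
    using \<delta>_pos \<delta>_le_half by (simp add: field_simps)
  ultimately show "2 \<le> p"
    using \<open>4 / \<delta> \<le> real p\<close> by simp
qed

definition rate :: real where "rate = 1 / real p"

lemma rate_pos: "0 < rate" and rate_less_one: "rate < 1"
  using two_le_p by (auto simp: rate_def)

lemma p_mult_one_minus_rate: "real p * (1 - rate) = real p - 1"
  using two_le_p by (simp add: rate_def field_simps)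

definition sample_time :: "nat \<Rightarrow> real" where "sample_time n = real n ^ p"

lemma sample_time_powr: "1 \<le> n \<Longrightarrow> sample_time n powr e = real n powr (real p * e)"
  unfolding sample_time_def by (simp add: powr_realpow[symmetric] powr_powr)

lemma one_le_sample_time: "1 \<le> n \<Longrightarrow> 1 \<le> sample_time n"
  unfolding sample_time_def by simp

lemma sample_time_bracket:
  assumes "1 \<le> N" "sample_time N \<le> t"
  obtains n where "N \<le> n" "sample_time n \<le> t" "t \<le> sample_time (Suc n)"
proof
  define n where "n = nat \<lfloor>t powr rate\<rfloor>"
  have "1 \<le> t" using assms one_le_sample_time by (meson order_trans)
  then have root: "t = (t powr rate) ^ p"
    using two_le_p by (simp add: rate_def powr_realpow[symmetric] powr_powr)
  have lower: "real n \<le> t powr rate"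
    by (simp add: n_def)
  have upper: "t powr rate < real (Suc n)"
    using powr_ge_zero[of t rate] by (simp add: n_def) linarith
  show "sample_time n \<le> t"
    unfolding sample_time_def by (subst root) (intro power_mono lower; simp)
  have t_less: "t < sample_time (Suc n)"
    unfolding sample_time_def using two_le_p by (subst root) (intro power_strict_mono upper; simp)
  then show "t \<le> sample_time (Suc n)" by simp
  have "real N ^ p < real (Suc n) ^ p"
    using assms(2) t_less by (simp add: sample_time_def)
  then have "real N < real (Suc n)"
    by (rule power_less_imp_less_base) simp
  then show "N \<le> n" by simp
qed

definition bad_set :: "('a \<Rightarrow> complex) \<Rightarrow> nat \<Rightarrow> 'a set" where
  "bad_set f n = {x \<in> space M. S f * sample_time n powr (1 - rate) < cmod (ergodic_integral f (sample_time n) x)}"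

lemma bad_set_sets: "f \<in> F \<Longrightarrow> bad_set f n \<in> sets M"
  unfolding bad_set_def using ergodic_integral_measurable[of f "sample_time n"] by measurable

lemma measure_bad_set_le:
  assumes f: "f \<in> F" and f0: "(\<integral>x. f x \<partial>M) = 0" and n: "1 \<le> n"
  shows "measure M (bad_set f n) \<le> (2 + C\<^sub>M) * real n powr (-2)"
proof (cases "S f = 0")
  case True
  then have "bad_set f n = {}"
    using norm_ergodic_integral_le[OF f] one_le_sample_time[OF n] by (force simp: bad_set_def)
  then show ?thesis using C\<^sub>M_pos by simp
next
  case False
  let ?T = "sample_time n"
  have "0 < S f" using False S_nonneg[OF f] by simp
  have T: "1 \<le> ?T" by (rule one_le_sample_time[OF n])
  have exponent: "real p * (2 - \<delta>) - real p * (2 * (1 - rate)) = 2 - real p * \<delta>"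
    using p_mult_one_minus_rate by (simp add: algebra_simps)
  have "measure M (bad_set f n) \<le> (2 + C\<^sub>M) * (S f)\<^sup>2 * ?T powr (2 - \<delta>) / (S f * ?T powr (1 - rate))\<^sup>2"
    unfolding bad_set_def using \<open>0 < S f\<close> T by (intro measure_ergodic_integral_gt_le f f0) auto
  also have "\<dots> = (2 + C\<^sub>M) * (?T powr (2 - \<delta>) / ?T powr (2 * (1 - rate)))"
    using \<open>0 < S f\<close> T by (simp add: power_mult_distrib powr_add[symmetric] power2_eq_square)
  also have "\<dots> = (2 + C\<^sub>M) * real n powr (2 - real p * \<delta>)"
    by (simp only: powr_diff[symmetric] sample_time_powr[OF n] exponent)
  also have "\<dots> \<le> (2 + C\<^sub>M) * real n powr (-2)"
    using n four_le_p_\<delta> C\<^sub>M_pos by (intro mult_left_mono powr_mono) auto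
  finally show ?thesis .
qed

lemma small_tail_of_bad_sets:
  assumes "0 < \<omega>"
  obtains N where "1 \<le> N"
    "\<And>f. f \<in> F \<Longrightarrow> (\<integral>x. f x \<partial>M) = 0 \<Longrightarrow> measure M (\<Union>k. bad_set f (k + N)) < \<omega>"
proof -
  let ?h = "\<lambda>n. (2 + C\<^sub>M) * real n powr (-2)"
  have "summable ?h"
    by (intro summable_mult) (simp add: summable_real_powr_iff)
  then have "(\<lambda>N. \<Sum>k. ?h (k + N)) \<longlonglongrightarrow> 0"
    by (rule suminf_exist_split2)
  from order_tendstoD(2)[OF this assms] obtain N0 where N0: "\<And>N. N0 \<le> N \<Longrightarrow> (\<Sum>k. ?h (k + N)) < \<omega>"
    unfolding eventually_sequentially by blast
  have tail: "(\<Sum>k. ?h (k + Suc N0)) < \<omega>"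
    using N0[of "Suc N0"] by simp
  have h_tail: "summable (\<lambda>k. ?h (k + Suc N0))"
    using \<open>summable ?h\<close> by (rule summable_ignore_initial_segment)
  have "measure M (\<Union>k. bad_set f (k + Suc N0)) < \<omega>" if "f \<in> F" "(\<integral>x. f x \<partial>M) = 0" for f
  proof -
    have bad_le: "measure M (bad_set f (k + Suc N0)) \<le> ?h (k + Suc N0)" for k
      using measure_bad_set_le[OF that, of "k + Suc N0"] by simp
    then have summable_bad: "summable (\<lambda>k. measure M (bad_set f (k + Suc N0)))"
      by (intro summable_comparison_test'[OF h_tail]) auto
    then have "measure M (\<Union>k. bad_set f (k + Suc N0)) \<le> (\<Sum>k. measure M (bad_set f (k + Suc N0)))"
      using bad_set_sets[OF that(1)] by (intro finite_measure.finite_measure_subadditive_countably[OF finite_measure]) auto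
    also have "\<dots> \<le> (\<Sum>k. ?h (k + Suc N0))"
      by (intro suminf_le bad_le summable_bad h_tail)
    finally show ?thesis using tail by simp
  qed
  then show ?thesis by (intro that[of "Suc N0"]) auto
qed

definition deviation_const :: real where "deviation_const = 1 + real p * 2 ^ (p - 1)"

lemma deviation_const_pos: "0 < deviation_const"
  unfolding deviation_const_def by (simp add: add_pos_nonneg)

lemma sample_time_gap_le:
  assumes n: "1 \<le> n"
  shows "sample_time (Suc n) - sample_time n \<le> (deviation_const - 1) * sample_time n powr (1 - rate)"
proof -
  have "sample_time (Suc n) - sample_time n \<le> real p * (1 + real n) ^ (p - 1)"
    using power_diff_le_mean_value[of "real n" "1 + real n" p] by (simp add: sample_time_def)
  also have "\<dots> \<le> real p * (2 * real n) ^ (p - 1)"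
    using n by (intro mult_left_mono power_mono) auto
  also have "\<dots> = real p * 2 ^ (p - 1) * real n powr (real p - 1)"
    using n two_le_p by (simp add: power_mult_distrib powr_realpow[symmetric])
  finally show ?thesis
    using n p_mult_one_minus_rate by (simp add: deviation_const_def sample_time_powr)
qed

lemma norm_ergodic_integral_off_bad_set:
  assumes f: "f \<in> F" and x: "x \<in> space M" "x \<notin> bad_set f n" and n: "1 \<le> n"
    and t: "sample_time n \<le> t" "t \<le> sample_time (Suc n)"
  shows "cmod (ergodic_integral f t x) \<le> deviation_const * S f * t powr (1 - rate)"
proof -
  let ?T = "sample_time n"
  have T: "1 \<le> ?T" by (rule one_le_sample_time[OF n])
  have "cmod (ergodic_integral f t x)
      \<le> cmod (ergodic_integral f ?T x) + cmod (ergodic_integral f t x - ergodic_integral f ?T x)"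
    by (rule norm_triangle_sub)
  also have "\<dots> \<le> S f * ?T powr (1 - rate) + S f * (sample_time (Suc n) - ?T)"
    using f x T t S_nonneg[OF f]
    by (intro add_mono order_trans[OF norm_ergodic_integral_diff_le] mult_left_mono)
       (auto simp: bad_set_def)
  also have "\<dots> \<le> S f * ?T powr (1 - rate) + S f * ((deviation_const - 1) * ?T powr (1 - rate))"
    using S_nonneg[OF f] sample_time_gap_le[OF n] by (intro add_mono mult_left_mono) auto
  also have "\<dots> = deviation_const * S f * ?T powr (1 - rate)"
    by (simp add: algebra_simps)
  also have "\<dots> \<le> deviation_const * S f * t powr (1 - rate)"
    using T t rate_less_one S_nonneg[OF f]
    by (intro mult_left_mono powr_mono2) (auto simp: deviation_const_def)
  finally show ?thesis .
qed

lemma ergodic_integral_bound_off_small_set: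
  assumes "0 < \<omega>"
  shows "\<exists>m'\<ge>1. \<forall>f\<in>F. (\<integral>x. f x \<partial>M) = 0 \<longrightarrow>
           (\<exists>Y\<in>sets M. 1 - \<omega> \<le> measure M Y \<and>
              (\<forall>x\<in>Y. \<forall>t\<ge>m'. cmod (ergodic_integral f t x) \<le> deviation_const * S f * t powr (1 - rate)))"
proof -
  obtain N where N: "1 \<le> N"
    and small: "\<And>f. f \<in> F \<Longrightarrow> (\<integral>x. f x \<partial>M) = 0 \<Longrightarrow> measure M (\<Union>k. bad_set f (k + N)) < \<omega>"
    using small_tail_of_bad_sets[OF assms] by blast
  have "\<exists>Y\<in>sets M. 1 - \<omega> \<le> measure M Y \<and>
      (\<forall>x\<in>Y. \<forall>t\<ge>sample_time N. cmod (ergodic_integral f t x) \<le> deviation_const * S f * t powr (1 - rate))"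
    if f: "f \<in> F" and f0: "(\<integral>x. f x \<partial>M) = 0" for f
  proof (intro bexI[of _ "space M - (\<Union>k. bad_set f (k + N))"] conjI ballI allI impI)
    have bad: "(\<Union>k. bad_set f (k + N)) \<in> sets M"
      using bad_set_sets[OF f] by blast
    then show "space M - (\<Union>k. bad_set f (k + N)) \<in> sets M" by blast
    show "1 - \<omega> \<le> measure M (space M - (\<Union>k. bad_set f (k + N)))"
      using prob_space.prob_compl[OF prob_space bad] small[OF f f0] by simp
    fix x t assume x: "x \<in> space M - (\<Union>k. bad_set f (k + N))" and t: "sample_time N \<le> t"
    obtain n where n: "N \<le> n" "sample_time n \<le> t" "t \<le> sample_time (Suc n)"
      using sample_time_bracket[OF N t] .
    have "x \<notin> bad_set f ((n - N) + N)"
      using x by blast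
    then show "cmod (ergodic_integral f t x) \<le> deviation_const * S f * t powr (1 - rate)"
      using norm_ergodic_integral_off_bad_set[OF f _ _ _ n(2,3)] x n(1) N by simp
  qed
  then show ?thesis
    using N one_le_sample_time by blast
qed

end

theorem lemma2p6:
  fixes M :: "'a measure" and \<phi> :: "real \<Rightarrow> 'a \<Rightarrow> 'a"
    and F :: "('a \<Rightarrow> complex) set" and S :: "('a \<Rightarrow> complex) \<Rightarrow> real"
    and C\<^sub>M \<eta> :: real
  assumes "mixing_flow_setting M \<phi> F S C\<^sub>M \<eta>"
  shows "\<exists>\<eta>' C'. 0 < \<eta>' \<and> \<eta>' < 1 \<and> C' > 0 \<and>
           (\<forall>\<omega>>0. \<exists>m'\<ge>1. \<forall>f\<in>F. (\<integral>x. f x \<partial>M) = 0 \<longrightarrow>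
              (\<exists>Y\<in>sets M. measure M Y \<ge> 1 - \<omega> \<and>
                 (\<forall>x\<in>Y. \<forall>t\<ge>m'.
                    cmod (\<integral>s. f (\<phi> s x) \<partial>(restrict_space lborel {0..t}))
                      \<le> C' * S f * t powr (1 - \<eta>'))))"
proof -
  interpret mixing_flow M \<phi> F S C\<^sub>M \<eta>
    by unfold_locales (fact assms)
  show ?thesis
    by (intro exI[of _ rate] exI[of _ deviation_const] conjI allI impI rate_pos rate_less_one
        deviation_const_pos ergodic_integral_bound_off_small_set[unfolded ergodic_integral_def])
qed

end
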